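(* Let $X$ be a real Banach space. The following statements are equivalent. (1) $X$ is rotund. (2) $r(Q_{B_X}(x_1),Q_{B_X}(x_2))=\|x_1-x_2\|$ for every $x_1,x_2\in S_X$. (3) $r(Q_{S_X}(x_1),Q_{S_X}(x_2))=\|x_1-x_2\|$ for every $x_1,x_2\in S_X$. (4) $r(Q_{S_X}(x_1),Q_{S_X}(x_2))=\|x_1-x_2\|$ for every $x_1,x_2\in S_X$ with $x_1\neq x_2$.
   Context: $B_X$ and $S_X$ denote the closed unit ball and unit sphere of $X$. For a non-empty bounded $F\subseteq X$ and $x\in X$, $r(F,x)=\sup\{\|x-y\|:y\in F\}$ and $Q_F(x)=\{y\in F:\|x-y\|=r(F,x)\}$. For non-empty bounded sets $A,B$, the generalized diameter is $r(A,B)=\sup\{\|a-b\|:a\in A,b\in B\}$. $X$ is rotund if $\|\frac{x_1+x_2}{2}\|<1$ whenever $x_1,x_2\in S_X$, $x_1\neq x_2$. *)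

theory Defs
  imports "HOL-Analysis.Analysis"
begin

definition farthest_radius :: "'a::real_normed_vector set \<Rightarrow> 'a \<Rightarrow> real" where
  "farthest_radius F x = Sup {norm (x - y) | y. y \<in> F}"

definition farthest_points :: "'a::real_normed_vector set \<Rightarrow> 'a \<Rightarrow> 'a set" where
  "farthest_points F x = {y \<in> F. norm (x - y) = farthest_radius F x}"

definition gen_diam :: "'a::real_normed_vector set \<Rightarrow> 'a set \<Rightarrow> real" where
  "gen_diam A B = Sup {norm (a - b) | a b. a \<in> A \<and> b \<in> B}"

definition rotund :: "'a::real_normed_vector itself \<Rightarrow> bool" where
  "rotund (TYPE('a)) \<longleftrightarrow>
     (\<forall>x1 x2 :: 'a. x1 \<in> sphere 0 1 \<longrightarrow> x2 \<in> sphere 0 1 \<longrightarrow> x1 \<noteq> x2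
        \<longrightarrow> norm ((1/2) *\<^sub>R (x1 + x2)) < 1)"

end

theory Submission
  imports Defs
begin

text \<open>
  For x on the unit sphere, the farthest points of the unit ball, and of the unit sphere, from x
  are exactly the points y of the sphere with \<open>\<parallel>x - y\<parallel> = 2\<close>, and \<open>-x\<close> is always one of them.
  In a rotund space \<open>-x\<close> is the only one, so both generalized diameters reduce to
  \<open>\<parallel>(-x\<^sub>1) - (-x\<^sub>2)\<parallel>\<close>. Conversely, if rotundity fails at \<open>x\<^sub>1 \<noteq> x\<^sub>2\<close>, i.e.
  \<open>\<parallel>x\<^sub>1 + x\<^sub>2\<parallel> = 2\<close>, then the triangle inequality forces \<open>\<parallel>a x\<^sub>1 + b x\<^sub>2\<parallel> = a + b\<close> for
  \<open>a, b \<ge> 0\<close>. Hence with z the midpoint, \<open>-x\<^sub>2\<close> is antipodal to \<open>x\<^sub>1\<close> and \<open>-x\<^sub>1\<close> to z,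
  so the generalized diameter for the pair \<open>x\<^sub>1, z\<close> is at least \<open>\<parallel>x\<^sub>1 - x\<^sub>2\<parallel> = 2\<parallel>x\<^sub>1 - z\<close>.
\<close>

definition antipodes :: "'a::real_normed_vector \<Rightarrow> 'a set" where
  "antipodes x = {y. norm y = 1 \<and> norm (x - y) = 2}"

lemma farthest_radius_eq_2:
  fixes x :: "'a::real_normed_vector"
  assumes "norm x = 1" "-x \<in> F" "F \<subseteq> cball 0 1"
  shows "farthest_radius F x = 2"
  unfolding farthest_radius_def
proof (rule cSup_eq_maximum)
  show "2 \<in> {norm (x - y) |y. y \<in> F}"
    using assms by (auto intro!: exI[of _ "-x"] simp flip: scaleR_2)
  fix z
  assume "z \<in> {norm (x - y) |y. y \<in> F}"
  then obtain y where "z = norm (x - y)" "y \<in> F"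
    by blast
  then show "z \<le> 2"
    using assms norm_triangle_ineq4[of x y] by auto
qed

lemma farthest_points_cball_eq_antipodes:
  fixes x :: "'a::real_normed_vector"
  assumes "norm x = 1"
  shows "farthest_points (cball 0 1) x = antipodes x"
proof -
  have "farthest_radius (cball 0 1) x = 2"
    by (rule farthest_radius_eq_2) (use assms in auto)
  moreover have "norm y = 1" if "norm y \<le> 1" "norm (x - y) = 2" for y
    using norm_triangle_ineq4[of x y] assms that by simp
  ultimately show ?thesis
    unfolding farthest_points_def antipodes_def by auto
qed

lemma farthest_points_sphere_eq_antipodes:
  fixes x :: "'a::real_normed_vector"
  assumes "norm x = 1"
  shows "farthest_points (sphere 0 1) x = antipodes x"
proof -
  have "farthest_radius (sphere 0 1) x = 2"
    by (rule farthest_radius_eq_2) (use assms in auto)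
  then show ?thesis
    unfolding farthest_points_def antipodes_def by auto
qed

lemma rotund_iff_norm_add_lt_2:
  "rotund TYPE('a::real_normed_vector) \<longleftrightarrow>
     (\<forall>x y :: 'a. norm x = 1 \<longrightarrow> norm y = 1 \<longrightarrow> x \<noteq> y \<longrightarrow> norm (x + y) < 2)"
  unfolding rotund_def by simp

lemma antipodes_rotund:
  fixes x :: "'a::real_normed_vector"
  assumes "rotund TYPE('a)" "norm x = 1"
  shows "antipodes x = {-x}"
proof -
  have "y = -x" if "norm y = 1" "norm (x - y) = 2" for y
    using assms that rotund_iff_norm_add_lt_2[where 'a='a]
    by (metis diff_minus_eq_add minus_minus norm_minus_cancel order.irrefl)
  then show ?thesis
    using assms(2) by (auto simp: antipodes_def simp flip: scaleR_2)
qed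

lemma gen_diam_singletons: "gen_diam {a} {b} = norm (a - b)"
  unfolding gen_diam_def by simp

lemma gen_diam_ge:
  fixes A B :: "'a::real_normed_vector set"
  assumes "bounded A" "bounded B" "a \<in> A" "b \<in> B"
  shows "norm (a - b) \<le> gen_diam A B"
  unfolding gen_diam_def
proof (rule cSup_upper)
  show "norm (a - b) \<in> {norm (a - b) |a b. a \<in> A \<and> b \<in> B}"
    using assms by blast
  obtain r s where "\<forall>x\<in>A. norm x \<le> r" "\<forall>x\<in>B. norm x \<le> s"
    using assms(1,2) by (auto simp: bounded_iff)
  then show "bdd_above {norm (a - b) |a b. a \<in> A \<and> b \<in> B}"
    by (intro bdd_aboveI[of _ "r + s"])
       (force intro: order.trans[OF norm_triangle_ineq4] add_mono)
qed

lemma bounded_antipodes: "bounded (antipodes x)"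
  unfolding antipodes_def bounded_iff by auto

lemma norm_nonneg_combination_eq:
  fixes x y :: "'a::real_normed_vector"
  assumes "norm x \<le> 1" "norm y \<le> 1" "norm (x + y) = 2" "a \<ge> 0" "b \<ge> 0"
  shows "norm (a *\<^sub>R x + b *\<^sub>R y) = a + b"
proof -
  have ge: "norm (a *\<^sub>R x + b *\<^sub>R y) \<ge> a + b"
    if "norm x \<le> 1" "norm y \<le> 1" "norm (x + y) = 2" "0 \<le> b" "b \<le> a"
    for a b :: real and x y :: 'a
  proof -
    have "2 * a = norm (a *\<^sub>R (x + y))"
      using that by simp
    also have "a *\<^sub>R (x + y) = (a *\<^sub>R x + b *\<^sub>R y) + (a - b) *\<^sub>R y"
      by (simp add: algebra_simps)
    also have "norm \<dots> \<le> norm (a *\<^sub>R x + b *\<^sub>R y) + (a - b)"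
      using that norm_triangle_ineq[of "a *\<^sub>R x + b *\<^sub>R y" "(a - b) *\<^sub>R y"]
        mult_left_le[of "norm y" "a - b"] by simp
    finally show ?thesis by simp
  qed
  have "norm (a *\<^sub>R x + b *\<^sub>R y) \<le> a + b"
    using assms norm_triangle_ineq[of "a *\<^sub>R x" "b *\<^sub>R y"]
      mult_left_le[of "norm x" a] mult_left_le[of "norm y" b] by simp
  moreover have "norm (a *\<^sub>R x + b *\<^sub>R y) \<ge> a + b"
  proof (cases "b \<le> a")
    case True
    then show ?thesis using ge assms by blast
  next
    case False
    then show ?thesis
      using ge[of y x a b] assms by (simp add: add.commute)
  qed
  ultimately show ?thesis by linarith
qed

lemma gen_diam_antipodes_gt_if_not_rotund:
  assumes "\<not> rotund TYPE('a::real_normed_vector)"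
  obtains y z :: "'a::real_normed_vector" where "norm y = 1" "norm z = 1" "y \<noteq> z"
    "norm (y - z) < gen_diam (antipodes y) (antipodes z)"
proof -
  obtain x1 x2 :: 'a
    where x: "norm x1 = 1" "norm x2 = 1" "x1 \<noteq> x2" "\<not> norm (x1 + x2) < 2"
    using assms unfolding rotund_iff_norm_add_lt_2 by blast
  with norm_triangle_ineq[of x1 x2] have sum: "norm (x1 + x2) = 2"
    by simp
  define z where "z = (1/2) *\<^sub>R x1 + (1/2) *\<^sub>R x2"
  have z: "norm z = 1"
    using norm_nonneg_combination_eq[of x1 x2 "1/2" "1/2"] x sum by (simp add: z_def)
  have "norm (z + x1) = norm ((3/2) *\<^sub>R x1 + (1/2) *\<^sub>R x2)"
    using scaleR_add_left[of 1 "1/2" x1] by (simp add: z_def algebra_simps)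
  also have "\<dots> = 2"
    using norm_nonneg_combination_eq[of x1 x2 "3/2" "1/2"] x sum by simp
  finally have "-x1 \<in> antipodes z"
    using x by (simp add: antipodes_def)
  moreover have "-x2 \<in> antipodes x1"
    using x sum by (simp add: antipodes_def)
  ultimately have "norm (-x2 - -x1) \<le> gen_diam (antipodes x1) (antipodes z)"
    by (intro gen_diam_ge bounded_antipodes)
  moreover have "x1 - z = (1/2) *\<^sub>R (x1 - x2)"
    using scaleR_add_left[of "1/2" "1/2" x1] by (simp add: z_def algebra_simps)
  then have "norm (x1 - z) < norm (x1 - x2)" "x1 \<noteq> z"
    using x by auto
  ultimately show ?thesis
    using that[OF x(1) z] by (simp add: norm_minus_commute)
qed

theorem theorem3p3:
  shows "(rotund TYPE('a::banach)
      \<longleftrightarrow> (\<forall>x1 x2 :: 'a. x1 \<in> sphere 0 1 \<longrightarrow> x2 \<in> sphere 0 1 \<longrightarrow>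
            gen_diam (farthest_points (cball 0 1) x1) (farthest_points (cball 0 1) x2) = norm (x1 - x2)))
    \<and> (rotund TYPE('a)
      \<longleftrightarrow> (\<forall>x1 x2 :: 'a. x1 \<in> sphere 0 1 \<longrightarrow> x2 \<in> sphere 0 1 \<longrightarrow>
            gen_diam (farthest_points (sphere 0 1) x1) (farthest_points (sphere 0 1) x2) = norm (x1 - x2)))
    \<and> (rotund TYPE('a)
      \<longleftrightarrow> (\<forall>x1 x2 :: 'a. x1 \<in> sphere 0 1 \<longrightarrow> x2 \<in> sphere 0 1 \<longrightarrow> x1 \<noteq> x2 \<longrightarrow>
            gen_diam (farthest_points (sphere 0 1) x1) (farthest_points (sphere 0 1) x2) = norm (x1 - x2)))"
proof -
  have rotund_gen_diam: "gen_diam (antipodes x1) (antipodes x2) = norm (x1 - x2)"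
    if "rotund TYPE('a)" "norm x1 = 1" "norm x2 = 1" for x1 x2 :: 'a
    using that by (simp add: antipodes_rotund gen_diam_singletons norm_minus_commute)
  have gen_diam_rotund: "rotund TYPE('a)"
    if "\<forall>x1 x2 :: 'a. norm x1 = 1 \<longrightarrow> norm x2 = 1 \<longrightarrow> x1 \<noteq> x2 \<longrightarrow>
          gen_diam (antipodes x1) (antipodes x2) = norm (x1 - x2)"
    using gen_diam_antipodes_gt_if_not_rotund[where 'a='a] that by (metis order.irrefl)
  show ?thesis
    using rotund_gen_diam gen_diam_rotund
    by (auto simp: farthest_points_cball_eq_antipodes farthest_points_sphere_eq_antipodes)
qed

end
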